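(* (Integration by parts for piecewise $\mathcal{C}^1$ functions) For every $u,v\in\mathfrak{U}(\mathbb{R})$ and every $\gamma_n<\gamma_m$ in $\Gamma$, $$\int_{\gamma_n}^{\gamma_m}D_2u(x)v(x)\,dx=-\int_{\gamma_n}^{\gamma_m}u(x)D_2v(x)\,dx+\sum_{i=n}^{m-1}\left[u^-(\gamma_{i+1})v^-(\gamma_{i+1})-u^+(\gamma_i)v^+(\gamma_i)\right].$$
   Context: Framework (Λ-limits / nonstandard analysis): $\mathfrak{X}=\mathcal{P}_{fin}(\mathfrak{F}(\mathbb{R},\mathbb{R}))$ directed by inclusion; $\mathbb{R}^*\supset\mathbb{R}$ is a non-Archimedean ordered field of Λ-limits of nets $\mathfrak{X}\to\mathbb{R}$; internal sets/functions, natural extensions $E^*,f^*$, hyperfinite sums are defined via Λ-limits; for internal $u$, $\int_a^bu\,dx$ means $(\int_a^b)^*u\,dx$. For $\lambda\in\mathfrak{X}$, $V_\lambda$ is the span of $\lambda$; an internal $u=\lim_{\lambda\uparrow\Lambda}u_\lambda$ is an ultrafunction if $u_\lambda\in V_\lambda$ for all $\lambda$; for a vector space $W$ of real functions, $\widetilde{W}=W^*\cap\{\text{ultrafunctions}\}$. Grid: a positive infinite $\beta\in\mathbb{R}^*$, a hyperfinite $\Gamma=\{\gamma_0<\dots<\gamma_\ell\}\subset\mathbb{R}^*$ with $\gamma_0=-\beta$, $\gamma_\ell=\beta$, $0<\gamma_{j+1}-\gamma_j<\eta$ for a fixed infinitesimal $\eta$, and $\mathbb{R}\subseteq\Gamma$;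 $\mathbb{I}_j=(\gamma_j,\gamma_{j+1})_{\mathbb{R}^*}$ with characteristic function $\chi_j$. $\mathfrak{U}(\mathbb{R})$: functions $u:[-\beta,\beta]\to\mathbb{R}^*$ of the form $\sum_{j=0}^{\ell-1}v_j\chi_j$ with $v_j\in\widetilde{\mathcal{C}^1(\mathbb{R})}$, with the $L^2$ inner product $\int^*uv$; $u^\pm(\gamma_j)$ are the internal one-sided limits of $u$ at grid points. For $u=\sum_jv_j\chi_j\in\mathfrak{U}(\mathbb{R})$, $u'=\sum_jv_j'\chi_j$ (piecewise derivative) and $D_2u=P_{\mathfrak{U}}(u')$, where $P_{\mathfrak{U}}$ is the orthogonal projection onto $\mathfrak{U}(\mathbb{R})$ in $[L^2(\mathbb{R})]^*$. *)

theory Defs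
  imports "HOL-Analysis.Analysis"
begin

text \<open>Index set of the Lambda-limits: finite sets of real functions (the finiteness
  is imposed through the ultrafilter, which is concentrated on finite sets).
  An internal object is represented by a net indexed by this type; two nets have the
  same Lambda-limit iff they agree eventually w.r.t. the ultrafilter (ultrapower
  semantics of Lambda-limits).\<close>
type_synonym idx = "(real \<Rightarrow> real) set"

definition fine_ultrafilter :: "idx filter \<Rightarrow> bool" where
  "fine_ultrafilter F \<longleftrightarrow>
     F \<noteq> bot \<and>
     (\<forall>P. eventually P F \<or> eventually (\<lambda>l. \<not> P l) F) \<and>
     eventually finite F \<and>
     (\<forall>\<mu>. finite \<mu> \<longrightarrow> eventually (\<lambda>l. \<mu> \<subseteq> l) F)"

definition Vspan :: "idx \<Rightarrow> (real \<Rightarrow> real) set" where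
  "Vspan l = {f. \<exists>c. f = (\<lambda>x. \<Sum>h\<in>l. c h * h x)}"

definition Ufun :: "idx \<Rightarrow> nat \<Rightarrow> (nat \<Rightarrow> real) \<Rightarrow> (real \<Rightarrow> real) set" where
  "Ufun l N g = {w. \<exists>vs :: nat \<Rightarrow> real \<Rightarrow> real.
      (\<forall>j<N. vs j \<in> Vspan l \<and> vs j C1_differentiable_on UNIV) \<and>
      w = (\<lambda>x. \<Sum>j<N. vs j x * indicator {g j<..<g (Suc j)} x)}"

text \<open>Piecewise derivative u' = sum of v_j' chi_j (on each open grid interval u coincides
  with v_j, so its derivative there is v_j'; it is 0 at grid points and outside).\<close>
definition pw_deriv :: "nat \<Rightarrow> (nat \<Rightarrow> real) \<Rightarrow> (real \<Rightarrow> real) \<Rightarrow> real \<Rightarrow> real" where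
  "pw_deriv N g w = (\<lambda>x. if \<exists>j<N. x \<in> {g j<..<g (Suc j)} then deriv w x else 0)"

definition L2proj :: "(real \<Rightarrow> real) set \<Rightarrow> (real \<Rightarrow> real) \<Rightarrow> real \<Rightarrow> real" where
  "L2proj S w = (THE p. p \<in> S \<and> (\<forall>q\<in>S. integral UNIV (\<lambda>x. (w x - p x) * q x) = 0))"

definition D2 :: "idx \<Rightarrow> nat \<Rightarrow> (nat \<Rightarrow> real) \<Rightarrow> (real \<Rightarrow> real) \<Rightarrow> real \<Rightarrow> real" where
  "D2 l N g u = L2proj (Ufun l N g) (pw_deriv N g u)"

end

theory Submission
  imports Defs "HOL-Library.Function_Algebras"
begin

text \<open>Everything happens at a fixed level \<open>\<lambda>\<close> of the \<open>\<Lambda>\<close>-limit, where \<open>\<UU>(\<real>)\<close> is a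
  finite-dimensional space of functions that are \<open>C\<^sup>1\<close> on each open grid cell and vanish at the
  grid points. The \<open>L\<^sup>2\<close> pairing is definite on such functions, so Gram--Schmidt gives the
  orthogonal projection \<open>D\<^sub>2 u\<close> of the piecewise derivative \<open>u'\<close>. Since the restriction of
  \<open>v\<close> to \<open>[\<gamma>\<^sub>n, \<gamma>\<^sub>m]\<close> again lies in \<open>\<UU>(\<real>)\<close>, orthogonality yields
  \<open>\<integral> D\<^sub>2u v = \<integral> u' v\<close> over that interval, and likewise with \<open>u\<close> and \<open>v\<close>
  exchanged. On each cell the classical product rule then produces the boundary terms,
  the cell values at the endpoints being the one-sided limits of \<open>u\<close> and \<open>v\<close>.\<close>

section \<open>Cellwise functions on a grid\<close>

definition increasing_grid :: "nat \<Rightarrow> (nat \<Rightarrow> real) \<Rightarrow> bool" where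
  "increasing_grid N g \<longleftrightarrow> (\<forall>j<N. g j < g (Suc j))"

definition cellwise :: "nat \<Rightarrow> (nat \<Rightarrow> real) \<Rightarrow> (nat \<Rightarrow> real \<Rightarrow> real) \<Rightarrow> real \<Rightarrow> real" where
  "cellwise N g fs = (\<lambda>x. \<Sum>j<N. fs j x * indicator {g j<..<g (Suc j)} x)"

lemma increasing_grid_mono:
  assumes "increasing_grid N g" "i \<le> j" "j \<le> N"
  shows "g i \<le> g j"
  using assms(2,3)
proof (induction j)
  case (Suc j)
  show ?case
  proof (cases "i = Suc j")
    case False
    then have "g i \<le> g j" using Suc by auto
    also have "g j < g (Suc j)" using assms(1) Suc.prems unfolding increasing_grid_def by auto
    finally show ?thesis by simp
  qed simp
qed simp

lemma grid_cells_disjoint: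
  assumes "increasing_grid N g" "j < N" "k < N"
    and "x \<in> {g j<..<g (Suc j)}" "x \<in> {g k<..<g (Suc k)}"
  shows "j = k"
proof (rule ccontr)
  assume "j \<noteq> k"
  then have "g (Suc j) \<le> g k \<or> g (Suc k) \<le> g j"
    using increasing_grid_mono[OF assms(1)] assms(2,3) by (cases "j < k") auto
  then show False using assms(4,5) by auto
qed

lemma cellwise_on_cell:
  assumes "increasing_grid N g" "j < N" "x \<in> {g j<..<g (Suc j)}"
  shows "cellwise N g fs x = fs j x"
proof -
  have "cellwise N g fs x = (\<Sum>k<N. if k = j then fs j x else 0)"
    unfolding cellwise_def
    using grid_cells_disjoint[OF assms(1,2)] assms(3) by (intro sum.cong) (auto simp: indicator_def)
  then show ?thesis using assms(2) by simp
qed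

lemma cellwise_off_cells:
  "\<not> (\<exists>j<N. x \<in> {g j<..<g (Suc j)}) \<Longrightarrow> cellwise N g fs x = 0"
  unfolding cellwise_def by (auto intro!: sum.neutral simp: indicator_def)

lemma cellwise_cases:
  assumes "increasing_grid N g"
  obtains j where "j < N" "x \<in> {g j<..<g (Suc j)}" "\<And>fs. cellwise N g fs x = fs j x"
  | "\<not> (\<exists>j<N. x \<in> {g j<..<g (Suc j)})" "\<And>fs. cellwise N g fs x = 0"
  using cellwise_on_cell[OF assms] cellwise_off_cells by blast

lemma cellwise_mult:
  assumes "increasing_grid N g"
  shows "(\<lambda>x. cellwise N g fs x * cellwise N g hs x) = cellwise N g (\<lambda>j x. fs j x * hs j x)"
proof
  fix x show "cellwise N g fs x * cellwise N g hs x = cellwise N g (\<lambda>j x. fs j x * hs j x) x"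
    by (rule cellwise_cases[OF assms, of x]) auto
qed

lemma cellwise_add:
  "(\<lambda>x. cellwise N g fs x + cellwise N g hs x) = cellwise N g (\<lambda>j x. fs j x + hs j x)"
  unfolding cellwise_def by (auto simp: sum.distrib algebra_simps)

lemma cellwise_scale: "(\<lambda>x. c * cellwise N g fs x) = cellwise N g (\<lambda>j x. c * fs j x)"
  unfolding cellwise_def by (rule ext) (simp only: sum_distrib_left mult.assoc)

lemma cellwise_restrict_interval:
  assumes g: "increasing_grid N g" and "n \<le> m" "m \<le> N"
  shows "(\<lambda>x. if x \<in> {g n..g m} then cellwise N g fs x else 0)
       = cellwise N g (\<lambda>j x. if n \<le> j \<and> j < m then fs j x else 0)"
proof
  fix x
  show "(if x \<in> {g n..g m} then cellwise N g fs x else 0)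
      = cellwise N g (\<lambda>j x. if n \<le> j \<and> j < m then fs j x else 0) x"
  proof (rule cellwise_cases[OF g, of x])
    fix j assume j: "j < N" "x \<in> {g j<..<g (Suc j)}" "\<And>fs. cellwise N g fs x = fs j x"
    have "x \<in> {g n..g m} \<longleftrightarrow> n \<le> j \<and> j < m"
    proof
      assume x: "x \<in> {g n..g m}"
      have False if "j < n" using increasing_grid_mono[OF g, of "Suc j" n] that j x assms by auto
      moreover have False if "m \<le> j" using increasing_grid_mono[OF g, of m j] that j x by auto
      ultimately show "n \<le> j \<and> j < m" by (meson not_le)
    next
      assume "n \<le> j \<and> j < m"
      then have "g n \<le> g j" "g (Suc j) \<le> g m" using increasing_grid_mono[OF g] j(1) assms by auto
      then show "x \<in> {g n..g m}" using j(2) by auto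
    qed
    then show ?thesis using j(3) by simp
  qed simp
qed

lemma cellwise_has_integral_UNIV:
  assumes "\<And>j. j < N \<Longrightarrow> continuous_on {g j..g (Suc j)} (fs j)"
  shows "(cellwise N g fs has_integral (\<Sum>j<N. integral {g j..g (Suc j)} (fs j))) UNIV"
  unfolding cellwise_def
proof (rule has_integral_sum)
  fix j assume "j \<in> {..<N}"
  then have "(fs j has_integral integral {g j..g (Suc j)} (fs j)) {g j..g (Suc j)}"
    using assms integrable_continuous_real by blast
  then have "(fs j has_integral integral {g j..g (Suc j)} (fs j)) {g j<..<g (Suc j)}"
    by (simp add: has_integral_Icc_iff_Ioo)
  then have "((\<lambda>x. if x \<in> {g j<..<g (Suc j)} then fs j x else 0)
               has_integral integral {g j..g (Suc j)} (fs j)) UNIV"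
    by (simp only: has_integral_restrict_UNIV)
  moreover have "(\<lambda>x. if x \<in> {g j<..<g (Suc j)} then fs j x else 0)
      = (\<lambda>x. fs j x * indicator {g j<..<g (Suc j)} x)"
    by (auto simp: indicator_def)
  ultimately show "((\<lambda>x. fs j x * indicator {g j<..<g (Suc j)} x)
               has_integral integral {g j..g (Suc j)} (fs j)) UNIV"
    by simp
qed simp

lemma cellwise_has_integral_interval:
  assumes g: "increasing_grid N g" and nm: "n \<le> m" "m \<le> N"
    and c: "\<And>j. j < N \<Longrightarrow> continuous_on {g j..g (Suc j)} (fs j)"
  shows "(cellwise N g fs has_integral (\<Sum>j\<in>{n..<m}. integral {g j..g (Suc j)} (fs j))) {g n..g m}"
proof -
  let ?hs = "\<lambda>j x. if n \<le> j \<and> j < m then fs j x else 0"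
  have "(cellwise N g ?hs has_integral (\<Sum>j<N. integral {g j..g (Suc j)} (?hs j))) UNIV"
  proof (rule cellwise_has_integral_UNIV)
    show "continuous_on {g j..g (Suc j)} (?hs j)" if "j < N" for j
      using c[OF that] by (cases "n \<le> j \<and> j < m") auto
  qed
  moreover have "(\<Sum>j<N. integral {g j..g (Suc j)} (?hs j))
      = (\<Sum>j\<in>{n..<m}. integral {g j..g (Suc j)} (fs j))"
  proof -
    have "(\<Sum>j<N. integral {g j..g (Suc j)} (?hs j))
        = (\<Sum>j<N. if n \<le> j \<and> j < m then integral {g j..g (Suc j)} (fs j) else 0)"
      by (intro sum.cong) auto
    also have "\<dots> = (\<Sum>j\<in>{j\<in>{..<N}. n \<le> j \<and> j < m}. integral {g j..g (Suc j)} (fs j))"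
      by (rule sum.inter_filter[symmetric]) simp
    also have "{j\<in>{..<N}. n \<le> j \<and> j < m} = {n..<m}" using nm by auto
    finally show ?thesis .
  qed
  ultimately have "((\<lambda>x. if x \<in> {g n..g m} then cellwise N g fs x else 0) has_integral
      (\<Sum>j\<in>{n..<m}. integral {g j..g (Suc j)} (fs j))) UNIV"
    by (simp only: cellwise_restrict_interval[OF g nm])
  then show ?thesis by (simp only: has_integral_restrict_UNIV)
qed

section \<open>Orthogonal projections for the \<open>L\<^sup>2\<close> pairing\<close>

interpretation fun_vs: vector_space "\<lambda>(c::real) (f::real \<Rightarrow> real) x. c * f x"
  by unfold_locales (auto simp: fun_eq_iff algebra_simps)

definition L2_inner :: "(real \<Rightarrow> real) \<Rightarrow> (real \<Rightarrow> real) \<Rightarrow> real" where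
  "L2_inner f h = integral UNIV (\<lambda>x. f x * h x)"

lemma L2_inner_commute: "L2_inner f h = L2_inner h f"
  unfolding L2_inner_def by (simp add: mult.commute)

locale L2_inner_space =
  fixes T :: "(real \<Rightarrow> real) set"
  assumes subspace: "fun_vs.subspace T"
    and integrable_mult: "\<lbrakk>f \<in> T; h \<in> T\<rbrakk> \<Longrightarrow> (\<lambda>x. f x * h x) integrable_on UNIV"
    and definite: "\<lbrakk>f \<in> T; L2_inner f f = 0\<rbrakk> \<Longrightarrow> f = 0"
begin

lemma inner_diff_scale_left:
  assumes "f \<in> T" "h \<in> T" "q \<in> T"
  shows "L2_inner (\<lambda>x. f x - c * h x) q = L2_inner f q - c * L2_inner h q"
proof -
  have "L2_inner (\<lambda>x. f x - c * h x) q = integral UNIV (\<lambda>x. f x * q x - c * (h x * q x))"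
    unfolding L2_inner_def by (simp add: algebra_simps)
  also have "\<dots> = L2_inner f q - c * L2_inner h q"
    unfolding L2_inner_def using integrable_mult[OF assms(1,3)] integrable_mult[OF assms(2,3)]
    by (subst integral_diff) (auto intro: integrable_on_mult_right)
  finally show ?thesis .
qed

lemma inner_add_scale_right:
  assumes "f \<in> T" "h \<in> T" "q \<in> T"
  shows "L2_inner q (\<lambda>x. f x + c * h x) = L2_inner q f + c * L2_inner q h"
  using inner_diff_scale_left[OF assms, of "- c"] by (simp add: L2_inner_commute)

lemma diff_scale_mem:
  assumes "f \<in> T" "h \<in> T"
  shows "(\<lambda>x. f x - c * h x) \<in> T"
proof -
  have "(\<lambda>x. c * h x) \<in> T" using fun_vs.subspace_scale[OF subspace assms(2)] .
  then have "f - (\<lambda>x. c * h x) \<in> T" using fun_vs.subspace_diff[OF subspace assms(1)] by blast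
  then show ?thesis by (simp add: fun_diff_def)
qed

text \<open>One Gram--Schmidt step: adjoining a vector orthogonal to \<open>span B\<close> only adds its
  Fourier coefficient to the projection.\<close>
lemma projection_insert_orthogonal:
  assumes B: "fun_vs.span B \<subseteq> T" and e: "e \<in> T" and w: "w \<in> T"
    and p: "p \<in> fun_vs.span B" "\<forall>q\<in>fun_vs.span B. L2_inner (\<lambda>x. w x - p x) q = 0"
    and e_orth: "\<forall>q\<in>fun_vs.span B. L2_inner e q = 0"
  shows "\<exists>p'\<in>fun_vs.span (insert e B).
           \<forall>q\<in>fun_vs.span (insert e B). L2_inner (\<lambda>x. w x - p' x) q = 0"
proof (cases "L2_inner e e = 0")
  case True
  then have "fun_vs.span (insert e B) = fun_vs.span B" using definite[OF e] by simp
  then show ?thesis using p by auto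
next
  case False
  define c where "c = L2_inner (\<lambda>x. w x - p x) e / L2_inner e e"
  define p' where "p' = (\<lambda>x. p x + c * e x)"
  have pT: "p \<in> T" using p(1) B by auto
  have rT: "(\<lambda>x. w x - 1 * p x) \<in> T" using diff_scale_mem[OF w pT] .
  have "p \<in> fun_vs.span (insert e B)" using fun_vs.span_mono[of B "insert e B"] p(1) by auto
  moreover have "(\<lambda>x. c * e x) \<in> fun_vs.span (insert e B)"
    by (intro fun_vs.span_scale fun_vs.span_base) simp
  ultimately have p': "p' \<in> fun_vs.span (insert e B)"
    unfolding p'_def using fun_vs.span_add by (simp add: plus_fun_def)
  have "fun_vs.span (insert e B) \<subseteq> T" using B e subspace
    by (intro fun_vs.span_minimal) (auto dest: fun_vs.span_base)
  then have resT: "(\<lambda>x. w x - p' x) \<in> T" using diff_scale_mem[OF w, of p' 1] p' by auto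
  have residual: "(\<lambda>x. w x - p' x) = (\<lambda>x. (w x - 1 * p x) - c * e x)"
    unfolding p'_def by auto
  have orth: "L2_inner (\<lambda>x. w x - p' x) q = L2_inner (\<lambda>x. w x - p x) q - c * L2_inner e q"
    if "q \<in> T" for q
    unfolding residual using inner_diff_scale_left[OF rT e that] by simp
  show ?thesis
  proof (intro bexI[OF _ p'] ballI)
    fix q assume "q \<in> fun_vs.span (insert e B)"
    then obtain k where k: "(\<lambda>x. q x - k * e x) \<in> fun_vs.span B"
      using fun_vs.span_breakdown_eq by (auto simp: fun_diff_def)
    define r where "r = (\<lambda>x. q x - k * e x)"
    have rT: "r \<in> T" using k B unfolding r_def by auto
    have q: "q = (\<lambda>x. r x + k * e x)" unfolding r_def by simp
    have "L2_inner (\<lambda>x. w x - p' x) r = 0"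
      using orth[OF rT] p(2) e_orth k unfolding r_def by simp
    moreover have "L2_inner (\<lambda>x. w x - p' x) e = 0"
      using orth[OF e] False unfolding c_def by simp
    ultimately show "L2_inner (\<lambda>x. w x - p' x) q = 0"
      unfolding q using inner_add_scale_right[OF rT e resT] by simp
  qed
qed

lemma span_subset: "B \<subseteq> T \<Longrightarrow> fun_vs.span B \<subseteq> T"
  by (rule fun_vs.span_minimal[OF _ subspace])

lemma projection_onto_span_exists:
  assumes "finite B" "B \<subseteq> T" "w \<in> T"
  shows "\<exists>p\<in>fun_vs.span B. \<forall>q\<in>fun_vs.span B. L2_inner (\<lambda>x. w x - p x) q = 0"
  using assms
proof (induction B arbitrary: w rule: finite_induct)
  case empty
  then show ?case by (auto intro!: bexI[of _ 0] simp: fun_vs.span_empty L2_inner_def)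
next
  case (insert e B)
  have B: "fun_vs.span B \<subseteq> T" and e: "e \<in> T" using insert.prems span_subset by auto
  obtain p where p: "p \<in> fun_vs.span B" "\<forall>q\<in>fun_vs.span B. L2_inner (\<lambda>x. w x - p x) q = 0"
    using insert.IH insert.prems by blast
  obtain q0 where q0: "q0 \<in> fun_vs.span B" "\<forall>q\<in>fun_vs.span B. L2_inner (\<lambda>x. e x - q0 x) q = 0"
    using insert.IH insert.prems e by blast
  define e' where "e' = (\<lambda>x. e x - q0 x)"
  have e'T: "e' \<in> T" unfolding e'_def using diff_scale_mem[OF e, of q0 1] q0(1) B by auto
  have "fun_vs.span (insert e' B) = fun_vs.span (insert e B)"
  proof -
    have "q0 \<in> fun_vs.span (insert e B)" "q0 \<in> fun_vs.span (insert e' B)"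
      using q0(1) fun_vs.span_mono[of B] by auto
    moreover have "e' = e - q0" "e = e' + q0" unfolding e'_def by auto
    ultimately have "e' \<in> fun_vs.span (insert e B)" "e \<in> fun_vs.span (insert e' B)"
      by (metis fun_vs.span_diff fun_vs.span_add fun_vs.span_base insertI1)+
    then show ?thesis
      by (auto simp: fun_vs.span_eq intro: fun_vs.span_base fun_vs.span_mono[THEN subsetD])
  qed
  then show ?case
    using projection_insert_orthogonal[OF B e'T insert.prems(2) p] q0(2) unfolding e'_def by simp
qed

lemma projection_unique:
  assumes S: "fun_vs.subspace S" "S \<subseteq> T" and w: "w \<in> T"
    and p1: "p1 \<in> S" "\<forall>q\<in>S. L2_inner (\<lambda>x. w x - p1 x) q = 0"
    and p2: "p2 \<in> S" "\<forall>q\<in>S. L2_inner (\<lambda>x. w x - p2 x) q = 0"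
  shows "p1 = p2"
proof -
  define d where "d = (\<lambda>x. p1 x - 1 * p2 x)"
  have "p1 - p2 \<in> S" using fun_vs.subspace_diff[OF S(1) p1(1) p2(1)] .
  then have dS: "d \<in> S" unfolding d_def by (simp add: fun_diff_def)
  have T1: "(\<lambda>x. w x - 1 * p2 x) \<in> T" and T2: "(\<lambda>x. w x - 1 * p1 x) \<in> T"
    using diff_scale_mem[OF w] p1(1) p2(1) S(2) by blast+
  have "d = (\<lambda>x. (w x - 1 * p2 x) - 1 * (w x - 1 * p1 x))" unfolding d_def by auto
  then have "L2_inner d d = L2_inner (\<lambda>x. w x - p2 x) d - L2_inner (\<lambda>x. w x - p1 x) d"
    using inner_diff_scale_left[OF T1 T2, of d 1] dS S(2) by auto
  then have "L2_inner d d = 0" using p1(2) p2(2) dS by simp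
  then have "d = 0" using definite dS S(2) by auto
  then show ?thesis unfolding d_def by (auto simp: fun_eq_iff)
qed

lemma L2proj_orthogonal:
  assumes S: "fun_vs.subspace S" "S \<subseteq> T" and fin: "finite E" "S \<subseteq> fun_vs.span E"
    and w: "w \<in> T"
  shows "L2proj S w \<in> S \<and> (\<forall>q\<in>S. L2_inner (\<lambda>x. w x - L2proj S w x) q = 0)"
proof -
  obtain B where B: "B \<subseteq> S" "fun_vs.independent B" "S \<subseteq> fun_vs.span B"
    using fun_vs.maximal_independent_subset[of S] by blast
  have "finite B" using fun_vs.independent_span_bound[OF fin(1) B(2)] B(1) fin(2) by blast
  moreover have "fun_vs.span B = S" using B(1,3) S(1) fun_vs.span_minimal[of B S] by auto
  ultimately obtain p where "p \<in> S" "\<forall>q\<in>S. L2_inner (\<lambda>x. w x - p x) q = 0"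
    using projection_onto_span_exists[of B w] B(1) S(2) w by auto
  then have "\<exists>!p. p \<in> S \<and> (\<forall>q\<in>S. L2_inner (\<lambda>x. w x - p x) q = 0)"
    using projection_unique[OF S w] by blast
  then show ?thesis unfolding L2proj_def L2_inner_def by (rule theI')
qed

end

section \<open>Piecewise continuous functions and \<open>\<UU>(\<real>)\<close>\<close>

definition piecewise_continuous :: "nat \<Rightarrow> (nat \<Rightarrow> real) \<Rightarrow> (real \<Rightarrow> real) set" where
  "piecewise_continuous N g = {cellwise N g fs |fs. \<forall>j<N. continuous_on UNIV (fs j)}"

lemma piecewise_continuousE:
  assumes "f \<in> piecewise_continuous N g"
  obtains fs where "\<And>j. j < N \<Longrightarrow> continuous_on UNIV (fs j)" "f = cellwise N g fs"
  using assms unfolding piecewise_continuous_def by blast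

lemma piecewise_continuous_subspace: "fun_vs.subspace (piecewise_continuous N g)"
proof (rule fun_vs.subspaceI)
  have "0 = cellwise N g (\<lambda>j x. 0)" unfolding cellwise_def zero_fun_def by simp
  then show "0 \<in> piecewise_continuous N g" unfolding piecewise_continuous_def by fastforce
next
  fix f h assume "f \<in> piecewise_continuous N g" "h \<in> piecewise_continuous N g"
  then obtain fs hs where "\<forall>j<N. continuous_on UNIV (fs j)" "f = cellwise N g fs"
    "\<forall>j<N. continuous_on UNIV (hs j)" "h = cellwise N g hs"
    by (metis piecewise_continuousE)
  then show "f + h \<in> piecewise_continuous N g"
    using cellwise_add[of N g fs hs] unfolding piecewise_continuous_def plus_fun_def
    by (auto intro!: exI[of _ "\<lambda>j x. fs j x + hs j x"] continuous_intros)
next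
  fix c f assume "f \<in> piecewise_continuous N g"
  then obtain fs where "\<forall>j<N. continuous_on UNIV (fs j)" "f = cellwise N g fs"
    by (metis piecewise_continuousE)
  then show "(\<lambda>x. c * f x) \<in> piecewise_continuous N g"
    using cellwise_scale[of c N g fs] unfolding piecewise_continuous_def
    by (auto intro!: exI[of _ "\<lambda>j x. c * fs j x"] continuous_intros)
qed

lemma piecewise_continuous_mult:
  assumes "increasing_grid N g" "f \<in> piecewise_continuous N g" "h \<in> piecewise_continuous N g"
  shows "(\<lambda>x. f x * h x) \<in> piecewise_continuous N g"
proof -
  obtain fs hs where "\<forall>j<N. continuous_on UNIV (fs j)" "f = cellwise N g fs"
    "\<forall>j<N. continuous_on UNIV (hs j)" "h = cellwise N g hs"
    using assms(2,3) by (metis piecewise_continuousE)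
  then show ?thesis
    using cellwise_mult[OF assms(1), of fs hs] unfolding piecewise_continuous_def
    by (auto intro!: exI[of _ "\<lambda>j x. fs j x * hs j x"] continuous_intros)
qed

lemma piecewise_continuous_integrable_UNIV:
  assumes "f \<in> piecewise_continuous N g"
  shows "f integrable_on UNIV"
proof -
  obtain fs where "\<And>j. j < N \<Longrightarrow> continuous_on UNIV (fs j)" "f = cellwise N g fs"
    using piecewise_continuousE[OF assms] by blast
  then show ?thesis using cellwise_has_integral_UNIV[of N g fs] continuous_on_subset by blast
qed

lemma piecewise_continuous_integrable_interval:
  assumes "increasing_grid N g" "n \<le> m" "m \<le> N" "f \<in> piecewise_continuous N g"
  shows "f integrable_on {g n..g m}"
proof -
  obtain fs where "\<And>j. j < N \<Longrightarrow> continuous_on UNIV (fs j)" "f = cellwise N g fs"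
    using piecewise_continuousE[OF assms(4)] by blast
  then show ?thesis
    using cellwise_has_integral_interval[OF assms(1-3), of fs] continuous_on_subset by blast
qed

text \<open>A cellwise function vanishes at the grid points, so a vanishing \<open>L\<^sup>2\<close> norm forces
  every continuous piece to vanish on its closed cell.\<close>
lemma piecewise_continuous_definite:
  assumes g: "increasing_grid N g" and f: "f \<in> piecewise_continuous N g"
    and zero: "L2_inner f f = 0"
  shows "f = 0"
proof -
  obtain fs where fs: "\<And>j. j < N \<Longrightarrow> continuous_on UNIV (fs j)" "f = cellwise N g fs"
    using piecewise_continuousE[OF f] by blast
  let ?sq = "\<lambda>j x. fs j x * fs j x"
  have c: "continuous_on {g j..g (Suc j)} (?sq j)" if "j < N" for j
    using fs(1)[OF that] by (auto intro!: continuous_intros intro: continuous_on_subset)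
  have "(\<Sum>j<N. integral {g j..g (Suc j)} (?sq j)) = L2_inner f f"
    unfolding L2_inner_def fs(2) cellwise_mult[OF g]
    using cellwise_has_integral_UNIV[of N g ?sq] c by (simp add: integral_unique)
  then have sum0: "(\<Sum>j<N. integral {g j..g (Suc j)} (?sq j)) = 0" using zero by simp
  have nonneg: "0 \<le> integral {g j..g (Suc j)} (?sq j)" if "j \<in> {..<N}" for j
    using c that by (auto intro!: integral_nonneg integrable_continuous_real)
  have piece0: "integral {g j..g (Suc j)} (?sq j) = 0" if "j < N" for j
    using sum_nonneg_eq_0_iff[of "{..<N}" "\<lambda>j. integral {g j..g (Suc j)} (?sq j)"] nonneg sum0 that
    by simp
  show "f = 0"
  proof
    fix x
    show "f x = 0 x"
    proof (rule cellwise_cases[OF g, of x])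
      fix j assume j: "j < N" "x \<in> {g j<..<g (Suc j)}" "\<And>fs. cellwise N g fs x = fs j x"
      have "(?sq j has_integral 0) (cbox (g j) (g (Suc j)))"
        using piece0[OF j(1)] c[OF j(1)] integrable_continuous_real
        by (metis cbox_interval has_integral_integral)
      moreover have "box (g j) (g (Suc j)) \<noteq> {}" using j(2) by (auto simp: box_real)
      ultimately have "?sq j x = 0"
        using has_integral_0_cbox_imp_0[of "g j" "g (Suc j)" "?sq j" x] c[OF j(1)] j(2)
        by (simp add: cbox_interval)
      then show ?thesis using j fs(2) by simp
    qed (use fs(2) in simp)
  qed
qed

lemma L2_inner_space_piecewise_continuous:
  "increasing_grid N g \<Longrightarrow> L2_inner_space (piecewise_continuous N g)"
  by unfold_locales (auto intro: piecewise_continuous_subspace piecewise_continuous_definite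
      piecewise_continuous_integrable_UNIV piecewise_continuous_mult)

lemma C1_differentiable_on_UNIV_imp_continuous_on:
  "f C1_differentiable_on UNIV \<Longrightarrow> continuous_on S f"
  using C1_diff_imp_diff differentiable_imp_continuous_on continuous_on_subset by blast

lemma C1_differentiable_on_UNIV_deriv:
  fixes f :: "real \<Rightarrow> real"
  assumes "f C1_differentiable_on UNIV"
  shows "(f has_real_derivative deriv f x) (at x)" "continuous_on S (deriv f)"
proof -
  obtain D where D: "\<And>x. (f has_vector_derivative D x) (at x)" "continuous_on UNIV D"
    using assms unfolding C1_differentiable_on_def by auto
  then have "\<And>x. (f has_real_derivative D x) (at x)"
    using has_real_derivative_iff_has_vector_derivative by blast
  moreover from this have "deriv f = D" using DERIV_imp_deriv by blast
  ultimately show "(f has_real_derivative deriv f x) (at x)" "continuous_on S (deriv f)"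
    using D(2) continuous_on_subset[of UNIV "deriv f" S] by auto
qed

lemma Ufun_cellwise_iff:
  "w \<in> Ufun L N g \<longleftrightarrow>
     (\<exists>vs. (\<forall>j<N. vs j \<in> Vspan L \<and> vs j C1_differentiable_on UNIV) \<and> w = cellwise N g vs)"
  by (simp add: Ufun_def cellwise_def)

lemma Vspan_zero: "(\<lambda>x. 0) \<in> Vspan L"
  unfolding Vspan_def by (auto intro!: exI[of _ "\<lambda>h. 0"])

lemma Vspan_add: "f \<in> Vspan L \<Longrightarrow> h \<in> Vspan L \<Longrightarrow> (\<lambda>x. f x + h x) \<in> Vspan L"
  unfolding Vspan_def
proof safe
  fix c1 c2
  show "\<exists>c. (\<lambda>x. (\<Sum>h\<in>L. c1 h * h x) + (\<Sum>h\<in>L. c2 h * h x)) = (\<lambda>x. \<Sum>h\<in>L. c h * h x)"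
    by (rule exI[of _ "\<lambda>h. c1 h + c2 h"]) (simp add: sum.distrib distrib_right)
qed

lemma Vspan_scale: "f \<in> Vspan L \<Longrightarrow> (\<lambda>x. a * f x) \<in> Vspan L"
  unfolding Vspan_def
proof safe
  fix c
  show "\<exists>c'. (\<lambda>x. a * (\<Sum>h\<in>L. c h * h x)) = (\<lambda>x. \<Sum>h\<in>L. c' h * h x)"
    by (rule exI[of _ "\<lambda>h. a * c h"]) (simp add: sum_distrib_left mult.assoc)
qed

lemma Ufun_subspace: "fun_vs.subspace (Ufun L N g)"
proof (rule fun_vs.subspaceI)
  have "0 = cellwise N g (\<lambda>j x. 0)" unfolding cellwise_def zero_fun_def by simp
  then show "0 \<in> Ufun L N g" unfolding Ufun_cellwise_iff using Vspan_zero by fastforce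
next
  fix f h assume "f \<in> Ufun L N g" "h \<in> Ufun L N g"
  then obtain fs hs where "\<forall>j<N. fs j \<in> Vspan L \<and> fs j C1_differentiable_on UNIV" "f = cellwise N g fs"
    "\<forall>j<N. hs j \<in> Vspan L \<and> hs j C1_differentiable_on UNIV" "h = cellwise N g hs"
    unfolding Ufun_cellwise_iff by blast
  then show "f + h \<in> Ufun L N g"
    using cellwise_add[of N g fs hs] unfolding Ufun_cellwise_iff plus_fun_def
    by (auto intro!: exI[of _ "\<lambda>j x. fs j x + hs j x"] Vspan_add)
next
  fix c f assume "f \<in> Ufun L N g"
  then obtain fs where "\<forall>j<N. fs j \<in> Vspan L \<and> fs j C1_differentiable_on UNIV" "f = cellwise N g fs"
    unfolding Ufun_cellwise_iff by blast
  then show "(\<lambda>x. c * f x) \<in> Ufun L N g"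
    using cellwise_scale[of c N g fs] unfolding Ufun_cellwise_iff
    by (auto intro!: exI[of _ "\<lambda>j x. c * fs j x"] Vspan_scale)
qed

lemma sum_fun_apply: "(\<Sum>a\<in>A. f a) x = (\<Sum>a\<in>A. f a x)"
  by (induction A rule: infinite_finite_induct) auto

lemma Ufun_subset_span:
  assumes "finite L"
  obtains E where "finite E" "Ufun L N g \<subseteq> fun_vs.span E"
proof
  let ?e = "\<lambda>(h, j) x. h x * indicator {g j<..<g (Suc j)} x"
  show "finite (?e ` (L \<times> {..<N}))" using assms by auto
  show "Ufun L N g \<subseteq> fun_vs.span (?e ` (L \<times> {..<N}))"
  proof
    fix w assume "w \<in> Ufun L N g"
    then obtain vs where vs: "\<forall>j<N. vs j \<in> Vspan L" "w = cellwise N g vs"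
      unfolding Ufun_cellwise_iff by blast
    then have "\<forall>j\<in>{..<N}. \<exists>c. vs j = (\<lambda>x. \<Sum>h\<in>L. c h * h x)"
      unfolding Vspan_def by auto
    then obtain C where C: "\<forall>j\<in>{..<N}. vs j = (\<lambda>x. \<Sum>h\<in>L. C j h * h x)"
      by (metis bchoice)
    have "w = (\<Sum>j<N. \<Sum>h\<in>L. (\<lambda>x. C j h * ?e (h, j) x))"
    proof
      fix x
      have "w x = (\<Sum>j<N. \<Sum>h\<in>L. C j h * ?e (h, j) x)"
        unfolding vs(2) cellwise_def using C
        by (simp add: sum_distrib_right mult.assoc)
      then show "w x = (\<Sum>j<N. \<Sum>h\<in>L. (\<lambda>x. C j h * ?e (h, j) x)) x"
        by (simp add: sum_fun_apply)
    qed
    also have "\<dots> \<in> fun_vs.span (?e ` (L \<times> {..<N}))"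
      by (intro fun_vs.span_sum fun_vs.span_scale fun_vs.span_base) auto
    finally show "w \<in> fun_vs.span (?e ` (L \<times> {..<N}))" .
  qed
qed

lemma Ufun_subset_piecewise_continuous: "Ufun L N g \<subseteq> piecewise_continuous N g"
proof
  fix w assume "w \<in> Ufun L N g"
  then obtain vs where "\<forall>j<N. vs j C1_differentiable_on UNIV" "w = cellwise N g vs"
    unfolding Ufun_cellwise_iff by blast
  then show "w \<in> piecewise_continuous N g"
    unfolding piecewise_continuous_def
    by (blast intro: C1_differentiable_on_UNIV_imp_continuous_on)
qed

lemma pw_deriv_cellwise:
  assumes g: "increasing_grid N g" and C1: "\<forall>j<N. vs j C1_differentiable_on UNIV"
  shows "pw_deriv N g (cellwise N g vs) = cellwise N g (\<lambda>j. deriv (vs j))"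
proof
  fix x
  show "pw_deriv N g (cellwise N g vs) x = cellwise N g (\<lambda>j. deriv (vs j)) x"
  proof (rule cellwise_cases[OF g, of x])
    fix j assume j: "j < N" "x \<in> {g j<..<g (Suc j)}" "\<And>fs. cellwise N g fs x = fs j x"
    have "(vs j has_real_derivative deriv (vs j) x) (at x)"
      using C1_differentiable_on_UNIV_deriv(1) C1 j(1) by blast
    then have "(cellwise N g vs has_real_derivative deriv (vs j) x) (at x)"
      by (rule has_field_derivative_transform_within_open[of _ _ _ "{g j<..<g (Suc j)}"])
        (use j(2) cellwise_on_cell[OF g j(1)] in auto)
    then show ?thesis unfolding pw_deriv_def using j by (auto intro: DERIV_imp_deriv)
  qed (auto simp: pw_deriv_def simp del: greaterThanLessThan_iff)
qed

lemma pw_deriv_piecewise_continuous: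
  assumes "increasing_grid N g" "u \<in> Ufun L N g"
  shows "pw_deriv N g u \<in> piecewise_continuous N g"
  using assms(2) pw_deriv_cellwise[OF assms(1)] C1_differentiable_on_UNIV_deriv(2)
  unfolding Ufun_cellwise_iff piecewise_continuous_def by fastforce

lemma D2_orthogonal:
  assumes g: "increasing_grid N g" and "finite L" and u: "u \<in> Ufun L N g"
  shows "D2 L N g u \<in> Ufun L N g"
    "\<forall>q\<in>Ufun L N g. L2_inner (\<lambda>x. pw_deriv N g u x - D2 L N g u x) q = 0"
proof -
  obtain E where "finite E" "Ufun L N g \<subseteq> fun_vs.span E"
    using Ufun_subset_span[OF \<open>finite L\<close>] .
  then show "D2 L N g u \<in> Ufun L N g"
    "\<forall>q\<in>Ufun L N g. L2_inner (\<lambda>x. pw_deriv N g u x - D2 L N g u x) q = 0"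
    unfolding D2_def
    using L2_inner_space.L2proj_orthogonal[OF L2_inner_space_piecewise_continuous[OF g]
        Ufun_subspace Ufun_subset_piecewise_continuous] pw_deriv_piecewise_continuous[OF g u]
    by blast+
qed

section \<open>Integration by parts\<close>

lemma Ufun_restrict_interval:
  assumes g: "increasing_grid N g" and nm: "n \<le> m" "m \<le> N" and w: "w \<in> Ufun L N g"
  shows "(\<lambda>x. if x \<in> {g n..g m} then w x else 0) \<in> Ufun L N g"
proof -
  obtain vs where vs: "\<forall>j<N. vs j \<in> Vspan L \<and> vs j C1_differentiable_on UNIV" "w = cellwise N g vs"
    using w unfolding Ufun_cellwise_iff by blast
  let ?ws = "\<lambda>j x. if n \<le> j \<and> j < m then vs j x else 0"
  have "(\<lambda>x. if x \<in> {g n..g m} then w x else 0) = cellwise N g ?ws"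
    unfolding vs(2) by (rule cellwise_restrict_interval[OF g nm])
  moreover have "?ws j \<in> Vspan L \<and> ?ws j C1_differentiable_on UNIV" if "j < N" for j
  proof (cases "n \<le> j \<and> j < m")
    case True
    show ?thesis unfolding if_P[OF True] using vs(1) that by simp
  next
    case False
    show ?thesis unfolding if_not_P[OF False] using Vspan_zero by simp
  qed
  ultimately show ?thesis unfolding Ufun_cellwise_iff by (intro exI[of _ ?ws]) blast
qed

text \<open>Orthogonality of \<open>u' - D\<^sub>2 u\<close> to the restriction of \<open>w\<close> to \<open>[g n, g m]\<close>, an element
  of \<open>Ufun\<close>, is exactly this identity.\<close>
lemma D2_interval_integral:
  assumes g: "increasing_grid N g" and L: "finite L" and nm: "n \<le> m" "m \<le> N"
    and u: "u \<in> Ufun L N g" and w: "w \<in> Ufun L N g"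
  shows "integral {g n..g m} (\<lambda>x. D2 L N g u x * w x)
       = integral {g n..g m} (\<lambda>x. pw_deriv N g u x * w x)"
proof -
  let ?I = "{g n..g m}" and ?P = "D2 L N g u" and ?du = "pw_deriv N g u"
  have "?P \<in> piecewise_continuous N g" "?du \<in> piecewise_continuous N g"
    "w \<in> piecewise_continuous N g"
    using D2_orthogonal(1)[OF g L u] pw_deriv_piecewise_continuous[OF g u] w
      Ufun_subset_piecewise_continuous by blast+
  then have int: "(\<lambda>x. ?du x * w x) integrable_on ?I" "(\<lambda>x. ?P x * w x) integrable_on ?I"
    using piecewise_continuous_integrable_interval[OF g nm] piecewise_continuous_mult[OF g]
    by blast+
  have "(\<lambda>x. (?du x - ?P x) * (if x \<in> ?I then w x else 0))
      = (\<lambda>x. if x \<in> ?I then ?du x * w x - ?P x * w x else 0)"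
    by (auto simp: algebra_simps)
  then have "L2_inner (\<lambda>x. ?du x - ?P x) (\<lambda>x. if x \<in> ?I then w x else 0)
      = integral UNIV (\<lambda>x. if x \<in> ?I then ?du x * w x - ?P x * w x else 0)"
    unfolding L2_inner_def by (simp only:)
  also have "\<dots> = integral ?I (\<lambda>x. ?du x * w x - ?P x * w x)"
    by (rule integral_restrict_UNIV)
  also have "\<dots> = integral ?I (\<lambda>x. ?du x * w x) - integral ?I (\<lambda>x. ?P x * w x)"
    by (rule integral_diff[OF int])
  finally have "L2_inner (\<lambda>x. ?du x - ?P x) (\<lambda>x. if x \<in> ?I then w x else 0)
      = integral ?I (\<lambda>x. ?du x * w x) - integral ?I (\<lambda>x. ?P x * w x)" .
  moreover have "L2_inner (\<lambda>x. ?du x - ?P x) (\<lambda>x. if x \<in> ?I then w x else 0) = 0"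
    using D2_orthogonal(2)[OF g L u] Ufun_restrict_interval[OF g nm w] by blast
  ultimately show ?thesis by simp
qed

lemma integral_product_rule:
  fixes f h :: "real \<Rightarrow> real"
  assumes "a \<le> b" and f: "f C1_differentiable_on UNIV" and h: "h C1_differentiable_on UNIV"
  shows "integral {a..b} (\<lambda>x. deriv f x * h x) + integral {a..b} (\<lambda>x. f x * deriv h x)
       = f b * h b - f a * h a"
proof -
  have "((\<lambda>x. f x * h x) has_vector_derivative (deriv f x * h x + f x * deriv h x))
          (at x within {a..b})" for x
    using DERIV_mult[OF C1_differentiable_on_UNIV_deriv(1)[OF f, of x]
        C1_differentiable_on_UNIV_deriv(1)[OF h, of x]]
    by (simp add: has_real_derivative_iff_has_vector_derivative has_vector_derivative_at_within
        mult.commute)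
  then have "((\<lambda>x. deriv f x * h x + f x * deriv h x) has_integral (f b * h b - f a * h a)) {a..b}"
    by (rule fundamental_theorem_of_calculus[OF \<open>a \<le> b\<close>])
  moreover have "(\<lambda>x. deriv f x * h x) integrable_on {a..b}" "(\<lambda>x. f x * deriv h x) integrable_on {a..b}"
    using C1_differentiable_on_UNIV_deriv(2)[OF f] C1_differentiable_on_UNIV_deriv(2)[OF h]
      C1_differentiable_on_UNIV_imp_continuous_on[OF f] C1_differentiable_on_UNIV_imp_continuous_on[OF h]
    by (auto intro!: integrable_continuous_real continuous_intros)
  ultimately show ?thesis by (simp add: integral_unique integral_add[symmetric])
qed

lemma Lim_at_left_cellwise:
  assumes g: "increasing_grid N g" and j: "j < N" and c: "continuous_on UNIV (vs j)"
  shows "Lim (at_left (g (Suc j))) (cellwise N g vs) = vs j (g (Suc j))"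
proof -
  have "(vs j \<longlongrightarrow> vs j (g (Suc j))) (at_left (g (Suc j)))"
    using c by (meson UNIV_I continuous_on_def filterlim_at_split)
  moreover have "g j < g (Suc j)" using g j unfolding increasing_grid_def by auto
  then have "eventually (\<lambda>x. vs j x = cellwise N g vs x) (at_left (g (Suc j)))"
    by (rule eventually_mono[OF eventually_at_left_real]) (use cellwise_on_cell[OF g j] in auto)
  ultimately have "(cellwise N g vs \<longlongrightarrow> vs j (g (Suc j))) (at_left (g (Suc j)))"
    using tendsto_cong by blast
  then show ?thesis by (rule tendsto_Lim[OF trivial_limit_at_left_real])
qed

lemma Lim_at_right_cellwise:
  assumes g: "increasing_grid N g" and j: "j < N" and c: "continuous_on UNIV (vs j)"
  shows "Lim (at_right (g j)) (cellwise N g vs) = vs j (g j)"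
proof -
  have "(vs j \<longlongrightarrow> vs j (g j)) (at_right (g j))"
    using c by (meson UNIV_I continuous_on_def filterlim_at_split)
  moreover have "g j < g (Suc j)" using g j unfolding increasing_grid_def by auto
  then have "eventually (\<lambda>x. vs j x = cellwise N g vs x) (at_right (g j))"
    by (rule eventually_mono[OF eventually_at_right_real]) (use cellwise_on_cell[OF g j] in auto)
  ultimately have "(cellwise N g vs \<longlongrightarrow> vs j (g j)) (at_right (g j))"
    using tendsto_cong by blast
  then show ?thesis by (rule tendsto_Lim[OF trivial_limit_at_right_real])
qed

lemma Ufun_integration_by_parts:
  assumes g: "increasing_grid N g" and nm: "n \<le> m" "m \<le> N"
    and u: "u \<in> Ufun L N g" and v: "v \<in> Ufun L N g"
  shows "integral {g n..g m} (\<lambda>x. pw_deriv N g u x * v x)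
       + integral {g n..g m} (\<lambda>x. u x * pw_deriv N g v x)
     = (\<Sum>i\<in>{n..<m}. Lim (at_left (g (Suc i))) u * Lim (at_left (g (Suc i))) v
                    - Lim (at_right (g i)) u * Lim (at_right (g i)) v)"
proof -
  obtain us where us: "\<forall>j<N. us j C1_differentiable_on UNIV" "u = cellwise N g us"
    using u unfolding Ufun_cellwise_iff by blast
  obtain vs where vs: "\<forall>j<N. vs j C1_differentiable_on UNIV" "v = cellwise N g vs"
    using v unfolding Ufun_cellwise_iff by blast
  let ?J = "\<lambda>j f. integral {g j..g (Suc j)} f"
  have cont: "continuous_on S (us j)" "continuous_on S (deriv (us j))"
    "continuous_on S (vs j)" "continuous_on S (deriv (vs j))" if "j < N" for j S
    using us(1) vs(1) that C1_differentiable_on_UNIV_imp_continuous_on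
      C1_differentiable_on_UNIV_deriv(2) by blast+
  have "(\<lambda>x. pw_deriv N g u x * v x) = cellwise N g (\<lambda>j x. deriv (us j) x * vs j x)"
    unfolding us(2) vs(2) pw_deriv_cellwise[OF g us(1)] by (rule cellwise_mult[OF g])
  then have left: "integral {g n..g m} (\<lambda>x. pw_deriv N g u x * v x)
      = (\<Sum>j\<in>{n..<m}. ?J j (\<lambda>x. deriv (us j) x * vs j x))"
    using cellwise_has_integral_interval[OF g nm, of "\<lambda>j x. deriv (us j) x * vs j x"] cont
    by (simp add: integral_unique continuous_intros)
  have "(\<lambda>x. u x * pw_deriv N g v x) = cellwise N g (\<lambda>j x. us j x * deriv (vs j) x)"
    unfolding us(2) vs(2) pw_deriv_cellwise[OF g vs(1)] by (rule cellwise_mult[OF g])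
  then have right: "integral {g n..g m} (\<lambda>x. u x * pw_deriv N g v x)
      = (\<Sum>j\<in>{n..<m}. ?J j (\<lambda>x. us j x * deriv (vs j) x))"
    using cellwise_has_integral_interval[OF g nm, of "\<lambda>j x. us j x * deriv (vs j) x"] cont
    by (simp add: integral_unique continuous_intros)
  have boundary: "?J i (\<lambda>x. deriv (us i) x * vs i x) + ?J i (\<lambda>x. us i x * deriv (vs i) x)
      = Lim (at_left (g (Suc i))) u * Lim (at_left (g (Suc i))) v
        - Lim (at_right (g i)) u * Lim (at_right (g i)) v" if "i \<in> {n..<m}" for i
  proof -
    have i: "i < N" using that nm by auto
    then have "g i \<le> g (Suc i)" using g unfolding increasing_grid_def by (simp add: less_imp_le)
    then show ?thesis
      unfolding us(2) vs(2) using integral_product_rule us(1) vs(1) i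
        Lim_at_left_cellwise[OF g i] Lim_at_right_cellwise[OF g i] cont(1,3)[OF i]
      by simp
  qed
  show ?thesis unfolding left right sum.distrib[symmetric] using boundary by (rule sum.cong[OF refl])
qed

lemma D2_integration_by_parts:
  assumes g: "increasing_grid N g" and L: "finite L" and nm: "n \<le> m" "m \<le> N"
    and u: "u \<in> Ufun L N g" and v: "v \<in> Ufun L N g"
  shows "integral {g n..g m} (\<lambda>x. D2 L N g u x * v x)
     = - integral {g n..g m} (\<lambda>x. u x * D2 L N g v x)
       + (\<Sum>i\<in>{n..<m}. Lim (at_left (g (Suc i))) u * Lim (at_left (g (Suc i))) v
                      - Lim (at_right (g i)) u * Lim (at_right (g i)) v)"
proof -
  have "integral {g n..g m} (\<lambda>x. u x * D2 L N g v x)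
      = integral {g n..g m} (\<lambda>x. u x * pw_deriv N g v x)"
    using D2_interval_integral[OF g L nm v u] by (simp add: mult.commute)
  moreover have "integral {g n..g m} (\<lambda>x. D2 L N g u x * v x)
      = integral {g n..g m} (\<lambda>x. pw_deriv N g u x * v x)"
    by (rule D2_interval_integral[OF g L nm u v])
  ultimately show ?thesis using Ufun_integration_by_parts[OF g nm u v] by linarith
qed

theorem mainTheorem13:
  fixes F :: "idx filter"
    and beta eta :: "idx \<Rightarrow> real"
    and ell :: "idx \<Rightarrow> nat"
    and gam :: "idx \<Rightarrow> nat \<Rightarrow> real"
    and u v :: "idx \<Rightarrow> real \<Rightarrow> real"
    and n m :: "idx \<Rightarrow> nat"
  assumes Lambda: "fine_ultrafilter F"
    and beta_inf: "\<forall>r::real. eventually (\<lambda>l. r < beta l) F"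
    and eta_infinitesimal: "\<forall>\<epsilon>>0. eventually (\<lambda>l. \<bar>eta l\<bar> < \<epsilon>) F"
    and grid: "eventually (\<lambda>l. gam l 0 = - beta l \<and> gam l (ell l) = beta l \<and>
                  (\<forall>j<ell l. 0 < gam l (Suc j) - gam l j \<and> gam l (Suc j) - gam l j < eta l)) F"
    and reals_in_grid: "\<forall>r::real. eventually (\<lambda>l. \<exists>j\<le>ell l. gam l j = r) F"
    and u_in: "eventually (\<lambda>l. u l \<in> Ufun l (ell l) (gam l)) F"
    and v_in: "eventually (\<lambda>l. v l \<in> Ufun l (ell l) (gam l)) F"
    and nm: "eventually (\<lambda>l. n l < m l \<and> m l \<le> ell l) F"
  shows "eventually (\<lambda>l.
     integral {gam l (n l)..gam l (m l)} (\<lambda>x. D2 l (ell l) (gam l) (u l) x * v l x)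
   = - integral {gam l (n l)..gam l (m l)} (\<lambda>x. u l x * D2 l (ell l) (gam l) (v l) x)
     + (\<Sum>i\<in>{n l..<m l}.
          Lim (at_left (gam l (Suc i))) (u l) * Lim (at_left (gam l (Suc i))) (v l)
        - Lim (at_right (gam l i)) (u l) * Lim (at_right (gam l i)) (v l))) F"
proof -
  have "eventually finite F" using Lambda unfolding fine_ultrafilter_def by blast
  with grid u_in v_in nm show ?thesis
  proof eventually_elim
    case (elim l)
    then have "increasing_grid (ell l) (gam l)" unfolding increasing_grid_def by auto
    with elim show ?case by (intro D2_integration_by_parts) auto
  qed
qed

end
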